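(* Consider the multiobjective composite problem $\min_{x\in\mathbb{R}^n} F(x)$ with $F=(F_1,\dots,F_m)$, $F_i=f_i+g_i$, where each $g_i$ is proper, convex and lower semicontinuous and each $f_i:\mathbb{R}^n\to\mathbb{R}$ is twice continuously differentiable (continuous Hessian) and $\mu$-strongly convex for some $\mu>0$. Let $\{x^k\}$ be the (infinite) sequence generated by the Newton-type proximal gradient method described in the context (with parameter $\sigma$), and let $x^*$ be its limit. Then for any $0<\epsilon\le(1-\sigma)\mu$ there exists $K_\epsilon>0$ such that for all $k\ge K_\epsilon$, \[ \|x^{k+1}-x^*\|\le\sqrt{\frac{\epsilon(1+\tau_k^2)}{\mu}}\,\|x^k-x^*\|, \] where $\tau_k:=\frac{\|x^{k+1}-x^k\|}{\|x^k-x^*\|}\in\Big[\frac{\mu-\sqrt{2\mu\epsilon-\epsilon^2}}{\mu-\epsilon},\frac{\mu+\sqrt{2\mu\epsilon-\epsilon^2}}{\mu-\epsilon}\Big]$. Furthermore, $\{x^k\}$ converges superlinearly to $x^*$.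
   Context: Notation: $[m]=\{1,\dots,m\}$. A twice continuously differentiable $h$ is $\mu$-strongly convex if $\mu I\preceq\nabla^2 h(x)$ for all $x$. Newton-type proximal gradient method: for $x\in\mathbb{R}^n$ let $d(x)=\arg\min_{d\in\mathbb{R}^n}\max_{i\in[m]}\{\langle\nabla f_i(x),d\rangle+g_i(x+d)-g_i(x)+\tfrac12\langle d,\nabla^2 f_i(x)d\rangle\}$ and let $\theta(x)$ be the optimal value. Given $x^0$ and $\sigma,\gamma\in(0,1)$, at iteration $k$ compute $d^k=d(x^k)$, $\theta^k=\theta(x^k)$, choose $t_k\in(0,1]$ as the largest element of $\{\gamma^j: j\in\mathbb{N},\ F_i(x^k+\gamma^j d^k)-F_i(x^k)\le \gamma^j\sigma\theta^k\ \forall i\in[m]\}$, and set $x^{k+1}=x^k+t_kd^k$. Standing assumption: the method generates an infinite sequence of points that are not Pareto critical ($d^k\ne0$ for all $k$); under the hypotheses this sequence converges to a Pareto solution $x^*$. *)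

theory Defs
  imports "HOL-Analysis.Analysis"
begin

definition proper_fun :: "('a \<Rightarrow> ereal) \<Rightarrow> bool" where
  "proper_fun g \<longleftrightarrow> (\<forall>x. g x \<noteq> -\<infinity>) \<and> (\<exists>x. g x \<noteq> \<infinity>)"

definition ereal_convex :: "('a::real_vector \<Rightarrow> ereal) \<Rightarrow> bool" where
  "ereal_convex g \<longleftrightarrow>
     (\<forall>x y t. 0 \<le> t \<and> t \<le> 1 \<longrightarrow>
        g ((1 - t) *\<^sub>R x + t *\<^sub>R y) \<le> ereal (1 - t) * g x + ereal t * g y)"

definition lsc_fun :: "('a::topological_space \<Rightarrow> ereal) \<Rightarrow> bool" where
  "lsc_fun g \<longleftrightarrow> (\<forall>x c. c < g x \<longrightarrow> (\<forall>\<^sub>F y in at x. c < g y))"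

definition newton_subobj ::
  "nat \<Rightarrow> (nat \<Rightarrow> real^'n \<Rightarrow> real^'n) \<Rightarrow> (nat \<Rightarrow> real^'n \<Rightarrow> real^'n^'n)
    \<Rightarrow> (nat \<Rightarrow> real^'n \<Rightarrow> ereal) \<Rightarrow> real^'n \<Rightarrow> real^'n \<Rightarrow> ereal" where
  "newton_subobj m Df H g x d =
     Max ((\<lambda>i. ereal (Df i x \<bullet> d) + g i (x + d) - g i x + ereal ((1/2) * (d \<bullet> (H i x *v d)))) ` {1..m})"

definition Fcomp :: "(nat \<Rightarrow> real^'n \<Rightarrow> real) \<Rightarrow> (nat \<Rightarrow> real^'n \<Rightarrow> ereal) \<Rightarrow> nat \<Rightarrow> real^'n \<Rightarrow> ereal" where
  "Fcomp f g i x = ereal (f i x) + g i x"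

definition armijo_steps ::
  "nat \<Rightarrow> (nat \<Rightarrow> real^'n \<Rightarrow> real) \<Rightarrow> (nat \<Rightarrow> real^'n \<Rightarrow> ereal) \<Rightarrow> real \<Rightarrow> real
    \<Rightarrow> real^'n \<Rightarrow> real^'n \<Rightarrow> ereal \<Rightarrow> real set" where
  "armijo_steps m f g \<sigma> \<gamma> x d \<theta> =
     {\<gamma> ^ j | j. \<forall>i\<in>{1..m}. Fcomp f g i (x + (\<gamma> ^ j) *\<^sub>R d) - Fcomp f g i x \<le> ereal (\<gamma> ^ j * \<sigma>) * \<theta>}"

end

theory Submission
  imports Defs
begin

(*
  Everything is reduced to the real-valued model
    model_max y u = max_i (<grad f_i y, u> + g_i(y+u) - g_i y + <u, Hess f_i y u> / 2),
  which is mu-strongly convex in u; a midpoint argument shows that its minimizer d_k satisfies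
    model_max (x_k) (d_k) + mu/4 |v - d_k|^2 <= model_max (x_k) v  for every feasible v.
  With v = 0 this makes d_k a descent direction, so F_i(x_k) decreases, and lower
  semicontinuity gives F_i(xstar) <= F_i(x_k).  Near xstar, continuity of the Hessians makes the
  second-order Taylor remainder o(|w|^2) uniformly in i; hence the Armijo test accepts every
  step s with s|d_k| small, the steps are bounded below, telescoping gives d_k -> 0, and
  eventually t_k = 1.  Taking v = xstar - x_k and using F_i(xstar) <= F_i(x_{k+1}) then yields
    mu/4 |x_{k+1} - xstar|^2 <= eta (|x_k - xstar|^2 + |d_k|^2)  for any eta > 0 eventually,
  i.e. superlinear convergence.  The two-sided bound on tau_k and the rate estimate follow
  from the ratio tending to 0 by the triangle inequality.
*)

lemma norm_matrix_vector_mult_le: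
  fixes A :: "real^'n^'m" and w :: "real^'n"
  shows "norm (A *v w) \<le> real CARD('m) * norm A * norm w"
proof -
  have "norm (A *v w) \<le> (\<Sum>i\<in>UNIV. \<bar>(A *v w) $ i\<bar>)"
    by (rule norm_le_l1_cart)
  also have "\<dots> \<le> (\<Sum>i::'m\<in>UNIV. norm A * norm w)"
  proof (rule sum_mono)
    fix i
    have "\<bar>(A *v w) $ i\<bar> \<le> norm (A $ i) * norm w"
      by (simp add: matrix_mult_dot Cauchy_Schwarz_ineq2)
    also have "\<dots> \<le> norm A * norm w"
      by (simp add: mult_right_mono Finite_Cartesian_Product.norm_nth_le)
    finally show "\<bar>(A *v w) $ i\<bar> \<le> norm A * norm w" .
  qed
  finally show ?thesis by simp
qed

lemma abs_quadratic_form_le: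
  fixes A :: "real^'n^'n" and w :: "real^'n"
  shows "\<bar>w \<bullet> (A *v w)\<bar> \<le> real CARD('n) * norm A * (w \<bullet> w)"
proof -
  have "\<bar>w \<bullet> (A *v w)\<bar> \<le> norm w * norm (A *v w)" by (rule Cauchy_Schwarz_ineq2)
  also have "\<dots> \<le> norm w * (real CARD('n) * norm A * norm w)"
    by (simp add: norm_matrix_vector_mult_le mult_left_mono)
  also have "\<dots> = real CARD('n) * norm A * (w \<bullet> w)"
    by (simp add: power2_norm_eq_inner[symmetric] power2_eq_square)
  finally show ?thesis .
qed

lemma quadratic_form_midpoint:
  fixes A :: "real^'n^'n" and u v :: "real^'n"
  shows "((u + v) /\<^sub>R 2) \<bullet> (A *v ((u + v) /\<^sub>R 2))
     = (u \<bullet> (A *v u)) / 2 + (v \<bullet> (A *v v)) / 2 - ((u - v) \<bullet> (A *v (u - v))) / 4"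
  by (simp add: matrix_vector_mult_scaleR matrix_vector_right_distrib matrix_vector_mult_diff_distrib
      inner_add_left inner_add_right inner_diff_left inner_diff_right) (simp add: field_simps)

lemma taylor_second_order_mean_value:
  fixes F :: "real^'n \<Rightarrow> real" and G :: "real^'n \<Rightarrow> real^'n" and A :: "real^'n \<Rightarrow> real^'n^'n"
  assumes dF: "\<And>y. (F has_derivative (\<lambda>v. G y \<bullet> v)) (at y)"
    and dG: "\<And>y. (G has_derivative (\<lambda>v. A y *v v)) (at y)"
  obtains \<xi> where "0 < \<xi>" "\<xi> < 1"
    "F (y + w) = F y + G y \<bullet> w + (w \<bullet> (A (y + \<xi> *\<^sub>R w) *v w)) / 2"
proof -
  define D :: "nat \<Rightarrow> real \<Rightarrow> real" where "D n s =
     (if n = 0 then F (y + s *\<^sub>R w) else if n = 1 then G (y + s *\<^sub>R w) \<bullet> w else w \<bullet> (A (y + s *\<^sub>R w) *v w))"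
    for n s
  have D0: "D 0 = (\<lambda>s. F (y + s *\<^sub>R w))" and D1: "D 1 = (\<lambda>s. G (y + s *\<^sub>R w) \<bullet> w)"
    by (simp_all add: D_def fun_eq_iff)
  have line: "((\<lambda>s. y + s *\<^sub>R w) has_derivative (\<lambda>h. h *\<^sub>R w)) (at s)" for s
    by (auto intro!: derivative_eq_intros)
  have "DERIV (D 0) s :> D 1 s" for s
    unfolding D0 D1 has_field_derivative_def
    using has_derivative_compose[OF line dF] by (rule has_derivative_eq_rhs) (auto simp: fun_eq_iff)
  moreover have "DERIV (D 1) s :> D 2 s" for s
  proof -
    have "((\<lambda>s. G (y + s *\<^sub>R w) \<bullet> w) has_derivative (\<lambda>h. (A (y + s *\<^sub>R w) *v (h *\<^sub>R w)) \<bullet> w)) (at s)"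
      using has_derivative_compose[OF line dG] by (auto intro!: derivative_eq_intros)
    then show ?thesis unfolding D1 has_field_derivative_def
      by (rule has_derivative_eq_rhs) (auto simp: D_def fun_eq_iff matrix_vector_mult_scaleR inner_commute)
  qed
  ultimately have "\<exists>\<xi>>0. \<xi> < 1 \<and> D 0 1 = (\<Sum>n<2. D n 0 / fact n * 1 ^ n) + D 2 \<xi> / fact 2 * 1 ^ 2"
    by (intro Maclaurin[of 1 2 D "D 0"]) (auto simp: numeral_2_eq_2 less_Suc_eq)
  then obtain \<xi> where "0 < \<xi>" "\<xi> < 1" "D 0 1 = (\<Sum>n<2. D n 0 / fact n) + D 2 \<xi> / fact 2"
    by auto
  then show ?thesis
    by (intro that[of \<xi>]) (simp_all add: D_def numeral_2_eq_2)
qed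

lemma taylor_second_order_remainder_small:
  fixes F :: "real^'n \<Rightarrow> real" and G :: "real^'n \<Rightarrow> real^'n" and A :: "real^'n \<Rightarrow> real^'n^'n"
  assumes dF: "\<And>y. (F has_derivative (\<lambda>v. G y \<bullet> v)) (at y)"
    and dG: "\<And>y. (G has_derivative (\<lambda>v. A y *v v)) (at y)"
    and cont: "isCont A x0" and \<eta>: "0 < \<eta>"
  shows "\<forall>\<^sub>F r in at_right 0. \<forall>y w. dist y x0 < r \<longrightarrow> dist (y + w) x0 < r \<longrightarrow>
           \<bar>F (y + w) - F y - G y \<bullet> w - (w \<bullet> (A y *v w)) / 2\<bar> \<le> \<eta> * (norm w)\<^sup>2"
proof -
  define C where "C = real CARD('n)"
  have C: "C > 0" unfolding C_def by simp
  obtain r0 where r0: "r0 > 0" and close: "\<And>z. dist z x0 < r0 \<Longrightarrow> dist (A z) (A x0) < \<eta> / C"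
    using cont \<eta> C unfolding continuous_at_eps_delta by (metis divide_pos_pos)
  have "\<bar>F (y + w) - F y - G y \<bullet> w - (w \<bullet> (A y *v w)) / 2\<bar> \<le> \<eta> * (norm w)\<^sup>2"
    if y: "dist y x0 < r0" and yw: "dist (y + w) x0 < r0" for y w
  proof -
    obtain \<xi> where \<xi>: "0 < \<xi>" "\<xi> < 1"
      and eq: "F (y + w) = F y + G y \<bullet> w + (w \<bullet> (A (y + \<xi> *\<^sub>R w) *v w)) / 2"
      using taylor_second_order_mean_value[OF dF dG] by blast
    have "(1 - \<xi>) *\<^sub>R y + \<xi> *\<^sub>R (y + w) \<in> ball x0 r0"
      using \<xi> y yw by (intro convexD[OF convex_ball]) (auto simp: dist_commute)
    then have z: "dist (y + \<xi> *\<^sub>R w) x0 < r0" by (simp add: algebra_simps dist_commute)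
    define D where "D = A (y + \<xi> *\<^sub>R w) - A y"
    have "norm D \<le> dist (A (y + \<xi> *\<^sub>R w)) (A x0) + dist (A y) (A x0)"
      unfolding D_def dist_norm[symmetric] by (rule dist_triangle2)
    also have "\<dots> < 2 * \<eta> / C" using close[OF z] close[OF y] by simp
    finally have "C * norm D \<le> 2 * \<eta>" using C by (simp add: field_simps)
    then have "\<bar>w \<bullet> (D *v w)\<bar> \<le> 2 * \<eta> * (w \<bullet> w)"
      using abs_quadratic_form_le[of w D] unfolding C_def
      by (meson inner_ge_zero mult_right_mono order_trans)
    moreover have "F (y + w) - F y - G y \<bullet> w - (w \<bullet> (A y *v w)) / 2 = (w \<bullet> (D *v w)) / 2"
      unfolding eq D_def by (simp add: matrix_vector_mult_diff_rdistrib inner_diff_right field_simps)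
    ultimately show ?thesis by (simp add: power2_norm_eq_inner)
  qed
  then show ?thesis
    unfolding eventually_at_right_field using r0 by (meson less_trans)
qed

lemma exists_power_between:
  fixes \<gamma> a :: real
  assumes "0 < \<gamma>" "\<gamma> < 1" "0 < a" "a \<le> 1"
  shows "\<exists>j. \<gamma> ^ j \<le> a \<and> \<gamma> * a < \<gamma> ^ j"
proof -
  have ex: "\<exists>j. \<gamma> ^ j \<le> a" using real_arch_pow_inv[of a \<gamma>] assms by (auto intro: less_imp_le)
  define j where "j = (LEAST j. \<gamma> ^ j \<le> a)"
  have j: "\<gamma> ^ j \<le> a" unfolding j_def using ex by (rule LeastI_ex)
  show ?thesis
  proof (cases j)
    case 0
    then show ?thesis using j assms by (intro exI[of _ j]) (simp add: mult_less_le_imp_less[of _ 1 _ 1, simplified])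
  next
    case (Suc j')
    then have "\<not> \<gamma> ^ j' \<le> a" using not_less_Least[of j' "\<lambda>j. \<gamma> ^ j \<le> a"] j_def by simp
    then show ?thesis using j Suc assms by (intro exI[of _ j]) simp
  qed
qed

lemma le_of_min_square_le:
  fixes n r c :: real
  assumes n: "0 \<le> n" and r: "0 < r" and c: "min (n\<^sup>2) (r * n) \<le> c"
  shows "n \<le> sqrt c + c / r"
proof -
  have "0 \<le> c" using n r c order_trans[of 0 "min (n\<^sup>2) (r * n)" c] by simp
  then have nonneg: "0 \<le> sqrt c" "0 \<le> c / r" using r by simp_all
  show ?thesis
  proof (cases "n\<^sup>2 \<le> r * n")
    case True
    then have "n \<le> sqrt c" using c n by (simp add: real_le_rsqrt)
    then show ?thesis using nonneg by linarith
  next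
    case False
    then have "n \<le> c / r" using c r by (simp add: field_simps)
    then show ?thesis using nonneg by linarith
  qed
qed

lemma lsc_fun_add_continuous:
  fixes f :: "'a::topological_space \<Rightarrow> real" and g :: "'a \<Rightarrow> ereal"
  assumes g: "lsc_fun g" and f: "continuous_on UNIV f"
  shows "lsc_fun (\<lambda>y. ereal (f y) + g y)"
  unfolding lsc_fun_def
proof (intro allI impI)
  fix x c assume "c < ereal (f x) + g x"
  then obtain c' where c': "c < ereal c'" "ereal c' < ereal (f x) + g x" using ereal_dense2 by blast
  then have "ereal (c' - f x) < g x" by (cases "g x") auto
  then obtain c'' where c'': "ereal (c' - f x) < ereal c''" "ereal c'' < g x" using ereal_dense2 by blast
  define \<delta> where "\<delta> = c'' - (c' - f x)"
  have \<delta>: "\<delta> > 0" using c'' by (simp add: \<delta>_def)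
  have "\<forall>\<^sub>F y in at x. ereal c'' < g y" using g c'' unfolding lsc_fun_def by blast
  moreover have "\<forall>\<^sub>F y in at x. dist (f y) (f x) < \<delta>"
    using f \<delta> by (intro tendstoD) (simp add: continuous_on_def)
  ultimately show "\<forall>\<^sub>F y in at x. c < ereal (f y) + g y"
  proof eventually_elim
    case (elim y)
    then have "ereal c' < ereal (f y) + g y"
      by (cases "g y") (auto simp: \<delta>_def dist_real_def)
    then show ?case using c' by order
  qed
qed

lemma lsc_fun_limit_le:
  fixes h :: "'a::topological_space \<Rightarrow> ereal"
  assumes h: "lsc_fun h" and X: "X \<longlonglongrightarrow> x" and bound: "\<forall>\<^sub>F k in sequentially. h (X k) \<le> c"
  shows "h x \<le> c"
proof (rule ccontr)
  assume "\<not> h x \<le> c"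
  then have "c < h x" by simp
  with h have "\<forall>\<^sub>F y in nhds x. c < h y"
    unfolding lsc_fun_def eventually_nhds_conv_at by blast
  then have "\<forall>\<^sub>F k in sequentially. c < h (X k)"
    using X unfolding filterlim_iff by blast
  with bound have "\<forall>\<^sub>F k in sequentially. False"
    by eventually_elim simp
  then show False by simp
qed

section \<open>Iterates of the proximal Newton method\<close>

locale prox_newton_run =
  fixes m :: nat
    and f :: "nat \<Rightarrow> real^'n \<Rightarrow> real"
    and Df :: "nat \<Rightarrow> real^'n \<Rightarrow> real^'n"
    and H :: "nat \<Rightarrow> real^'n \<Rightarrow> real^'n^'n"
    and g :: "nat \<Rightarrow> real^'n \<Rightarrow> ereal"
    and \<mu> \<sigma> \<gamma> :: real
    and x d :: "nat \<Rightarrow> real^'n"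
    and \<theta> :: "nat \<Rightarrow> ereal"
    and t :: "nat \<Rightarrow> real"
    and xstar :: "real^'n"
  assumes m: "m \<ge> 1"
    and g_proper: "\<forall>i\<in>{1..m}. proper_fun (g i)"
    and g_convex: "\<forall>i\<in>{1..m}. ereal_convex (g i)"
    and g_lsc: "\<forall>i\<in>{1..m}. lsc_fun (g i)"
    and f_grad: "\<forall>i\<in>{1..m}. \<forall>y. (f i has_derivative (\<lambda>v. Df i y \<bullet> v)) (at y)"
    and f_hess: "\<forall>i\<in>{1..m}. \<forall>y. (Df i has_derivative (\<lambda>v. H i y *v v)) (at y)"
    and hess_cont: "\<forall>i\<in>{1..m}. continuous_on UNIV (H i)"
    and mu_pos: "\<mu> > 0"
    and strongly_convex: "\<forall>i\<in>{1..m}. \<forall>y v. \<mu> * (v \<bullet> v) \<le> v \<bullet> (H i y *v v)"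
    and sigma: "0 < \<sigma>" "\<sigma> < 1"
    and gamma: "0 < \<gamma>" "\<gamma> < 1"
    and x0_dom: "\<forall>i\<in>{1..m}. g i (x 0) \<noteq> \<infinity>"
    and dir: "\<forall>k. \<forall>v. newton_subobj m Df H g (x k) (d k) \<le> newton_subobj m Df H g (x k) v"
    and val: "\<forall>k. \<theta> k = newton_subobj m Df H g (x k) (d k)"
    and step: "\<forall>k. t k \<in> armijo_steps m f g \<sigma> \<gamma> (x k) (d k) (\<theta> k)
                    \<and> (\<forall>s\<in>armijo_steps m f g \<sigma> \<gamma> (x k) (d k) (\<theta> k). s \<le> t k)"
    and update: "\<forall>k. x (Suc k) = x k + t k *\<^sub>R d k"
    and not_crit: "\<forall>k. d k \<noteq> 0"
    and lim: "x \<longlonglongrightarrow> xstar"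
begin

abbreviation in_dom :: "real^'n \<Rightarrow> bool" where
  "in_dom y \<equiv> \<forall>i\<in>{1..m}. g i y \<noteq> \<infinity>"

text \<open>Since \<open>real_of_ereal \<infinity> = 0\<close>, the real forms below are meaningful only on the domain of g.\<close>

definition greal :: "nat \<Rightarrow> real^'n \<Rightarrow> real" where
  "greal i y = real_of_ereal (g i y)"

definition Freal :: "nat \<Rightarrow> real^'n \<Rightarrow> real" where
  "Freal i y = f i y + greal i y"

definition model :: "real^'n \<Rightarrow> nat \<Rightarrow> real^'n \<Rightarrow> real" where
  "model y i u = Df i y \<bullet> u + greal i (y + u) - greal i y + (u \<bullet> (H i y *v u)) / 2"

definition model_max :: "real^'n \<Rightarrow> real^'n \<Rightarrow> real" where
  "model_max y u = Max ((\<lambda>i. model y i u) ` {1..m})"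

lemma g_eq_ereal: "i \<in> {1..m} \<Longrightarrow> g i y \<noteq> \<infinity> \<Longrightarrow> g i y = ereal (greal i y)"
  using g_proper unfolding proper_fun_def greal_def by (cases "g i y") auto

lemma Fcomp_eq_ereal: "i \<in> {1..m} \<Longrightarrow> g i y \<noteq> \<infinity> \<Longrightarrow> Fcomp f g i y = ereal (Freal i y)"
  using g_eq_ereal[of i y] by (simp add: Fcomp_def Freal_def)

lemma model_le_model_max: "i \<in> {1..m} \<Longrightarrow> model y i u \<le> model_max y u"
  unfolding model_max_def by (rule Max_ge) auto

lemma model_max_attained: "\<exists>i\<in>{1..m}. model_max y u = model y i u"
proof -
  have "model_max y u \<in> (\<lambda>i. model y i u) ` {1..m}"
    unfolding model_max_def using m by (intro Max_in) auto
  then show ?thesis by auto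
qed

lemma model_max_zero: "model_max y 0 = 0"
proof -
  have "(\<lambda>i. model y i 0) ` {1..m} = {0}" using m by (auto simp: model_def)
  then show ?thesis by (simp add: model_max_def)
qed

lemma newton_subobj_eq_model_max:
  assumes "in_dom y" "in_dom (y + u)"
  shows "newton_subobj m Df H g y u = ereal (model_max y u)"
proof -
  have "newton_subobj m Df H g y u = Max (ereal ` (\<lambda>i. model y i u) ` {1..m})"
    unfolding newton_subobj_def image_image
  proof (intro arg_cong[where f = Max] image_cong refl)
    fix i assume "i \<in> {1..m}"
    with assms have "g i y = ereal (greal i y)" "g i (y + u) = ereal (greal i (y + u))"
      by (auto intro: g_eq_ereal)
    then show "ereal (Df i y \<bullet> u) + g i (y + u) - g i y + ereal ((1/2) * (u \<bullet> (H i y *v u)))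
        = ereal (model y i u)"
      by (simp add: model_def)
  qed
  also have "\<dots> = ereal (model_max y u)"
    unfolding model_max_def using m by (intro mono_Max_commute[symmetric]) (auto simp: mono_def)
  finally show ?thesis .
qed

lemma newton_subobj_eq_infinity:
  assumes "in_dom y" "j \<in> {1..m}" "g j (y + u) = \<infinity>"
  shows "newton_subobj m Df H g y u = \<infinity>"
proof -
  have "ereal (Df j y \<bullet> u) + g j (y + u) - g j y + ereal ((1/2) * (u \<bullet> (H j y *v u)))
      \<le> newton_subobj m Df H g y u"
    unfolding newton_subobj_def using assms(2) by (intro Max_ge) auto
  then show ?thesis using assms g_eq_ereal[of j y] by simp
qed

lemma direction_in_dom_and_value:
  assumes "in_dom (x k)"
  shows "in_dom (x k + d k)" and "\<theta> k = ereal (model_max (x k) (d k))"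
proof -
  have zero: "newton_subobj m Df H g (x k) 0 = 0"
    using newton_subobj_eq_model_max[of "x k" 0] assms by (simp add: model_max_zero)
  show dom: "in_dom (x k + d k)"
  proof (intro ballI notI)
    fix j assume "j \<in> {1..m}" "g j (x k + d k) = \<infinity>"
    then have "newton_subobj m Df H g (x k) (d k) = \<infinity>"
      using newton_subobj_eq_infinity assms by blast
    with dir zero have "\<infinity> \<le> (0::ereal)" by metis
    then show False by simp
  qed
  show "\<theta> k = ereal (model_max (x k) (d k))"
    using val newton_subobj_eq_model_max[OF assms dom] by simp
qed

lemma step_is_armijo_power:
  "\<exists>j. t k = \<gamma> ^ j \<and>
     (\<forall>i\<in>{1..m}. Fcomp f g i (x k + t k *\<^sub>R d k) - Fcomp f g i (x k) \<le> ereal (t k * \<sigma>) * \<theta> k)"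
  using step[rule_format, of k] unfolding armijo_steps_def by auto

lemma step_pos: "0 < t k" and step_le_one: "t k \<le> 1"
  using step_is_armijo_power[of k] gamma by (auto simp: power_le_one)

lemma armijo_condition_real:
  assumes dom: "in_dom (x k)" and i: "i \<in> {1..m}"
    and armijo: "Fcomp f g i (x k + s *\<^sub>R d k) - Fcomp f g i (x k) \<le> ereal (s * \<sigma>) * \<theta> k"
  shows "g i (x k + s *\<^sub>R d k) \<noteq> \<infinity>"
    and "Freal i (x k + s *\<^sub>R d k) - Freal i (x k) \<le> s * \<sigma> * model_max (x k) (d k)"
proof -
  have "Fcomp f g i (x k) = ereal (Freal i (x k))" using Fcomp_eq_ereal i dom by blast
  moreover note \<theta> = direction_in_dom_and_value(2)[OF dom]
  ultimately show fin: "g i (x k + s *\<^sub>R d k) \<noteq> \<infinity>"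
    using armijo by (auto simp: Fcomp_def)
  show "Freal i (x k + s *\<^sub>R d k) - Freal i (x k) \<le> s * \<sigma> * model_max (x k) (d k)"
    using armijo \<theta> Fcomp_eq_ereal[OF i fin] Fcomp_eq_ereal[OF i] dom i by simp
qed

lemma in_dom_iterate: "in_dom (x k)"
proof (induction k)
  case 0
  then show ?case using x0_dom by simp
next
  case (Suc k)
  then show ?case
    using step_is_armijo_power[of k] armijo_condition_real(1)[OF Suc.IH] update by auto
qed

lemma in_dom_direction: "in_dom (x k + d k)"
  using direction_in_dom_and_value(1)[OF in_dom_iterate] .

lemma theta_eq_model_max: "\<theta> k = ereal (model_max (x k) (d k))"
  using direction_in_dom_and_value(2)[OF in_dom_iterate] .

lemma direction_minimizes_model_max:
  "in_dom (x k + u) \<Longrightarrow> model_max (x k) (d k) \<le> model_max (x k) u"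
  using dir newton_subobj_eq_model_max[OF in_dom_iterate] in_dom_direction by (metis ereal_less_eq(3))

lemma armijo_decrease:
  "i \<in> {1..m} \<Longrightarrow> Freal i (x (Suc k)) - Freal i (x k) \<le> t k * \<sigma> * model_max (x k) (d k)"
  using step_is_armijo_power[of k] armijo_condition_real(2)[OF in_dom_iterate] update by auto

lemma armijo_power_le_step:
  assumes "\<forall>i\<in>{1..m}. g i (x k + \<gamma> ^ j *\<^sub>R d k) \<noteq> \<infinity> \<and>
             Freal i (x k + \<gamma> ^ j *\<^sub>R d k) - Freal i (x k) \<le> \<gamma> ^ j * \<sigma> * model_max (x k) (d k)"
  shows "\<gamma> ^ j \<le> t k"
proof -
  have "\<gamma> ^ j \<in> armijo_steps m f g \<sigma> \<gamma> (x k) (d k) (\<theta> k)"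
    unfolding armijo_steps_def
    using assms in_dom_iterate Fcomp_eq_ereal theta_eq_model_max by auto
  then show ?thesis using step by blast
qed

lemma greal_convex:
  assumes i: "i \<in> {1..m}" and dom: "g i a \<noteq> \<infinity>" "g i b \<noteq> \<infinity>" and s: "0 \<le> s" "s \<le> 1"
  shows "g i ((1 - s) *\<^sub>R a + s *\<^sub>R b) \<noteq> \<infinity>"
    and "greal i ((1 - s) *\<^sub>R a + s *\<^sub>R b) \<le> (1 - s) * greal i a + s * greal i b"
proof -
  have "g i ((1 - s) *\<^sub>R a + s *\<^sub>R b) \<le> ereal (1 - s) * g i a + ereal s * g i b"
    using g_convex i s unfolding ereal_convex_def by blast
  also have "\<dots> = ereal ((1 - s) * greal i a + s * greal i b)"
    using g_eq_ereal[OF i dom(1)] g_eq_ereal[OF i dom(2)] by simp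
  finally have le: "g i ((1 - s) *\<^sub>R a + s *\<^sub>R b) \<le> ereal ((1 - s) * greal i a + s * greal i b)" .
  then show fin: "g i ((1 - s) *\<^sub>R a + s *\<^sub>R b) \<noteq> \<infinity>" by auto
  show "greal i ((1 - s) *\<^sub>R a + s *\<^sub>R b) \<le> (1 - s) * greal i a + s * greal i b"
    using le g_eq_ereal[OF i fin] by simp
qed

lemma in_dom_midpoint:
  assumes "in_dom (y + u)" "in_dom (y + v)"
  shows "in_dom (y + (u + v) /\<^sub>R 2)"
proof -
  have "(1 - 1/2) *\<^sub>R (y + u) + (1/2) *\<^sub>R (y + v) = y + (u + v) /\<^sub>R 2"
    by (simp add: vec_eq_iff field_simps)
  then show ?thesis using greal_convex(1)[of _ "y + u" "y + v" "1/2"] assms by force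
qed

lemma model_midpoint_le:
  assumes i: "i \<in> {1..m}" and dom: "in_dom (y + u)" "in_dom (y + v)"
  shows "model y i ((u + v) /\<^sub>R 2) \<le> (model y i u + model y i v) / 2 - \<mu> / 8 * (norm (u - v))\<^sup>2"
proof -
  have "(1 - 1/2) *\<^sub>R (y + u) + (1/2) *\<^sub>R (y + v) = y + (u + v) /\<^sub>R 2"
    by (simp add: vec_eq_iff field_simps)
  then have g_mid: "greal i (y + (u + v) /\<^sub>R 2) \<le> (greal i (y + u) + greal i (y + v)) / 2"
    using greal_convex(2)[OF i, of "y + u" "y + v" "1/2"] dom i by simp
  have "\<mu> * (norm (u - v))\<^sup>2 \<le> (u - v) \<bullet> (H i y *v (u - v))"
    using strongly_convex i by (simp add: power2_norm_eq_inner)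
  moreover have "Df i y \<bullet> ((u + v) /\<^sub>R 2) = (Df i y \<bullet> u + Df i y \<bullet> v) / 2"
    by (simp add: inner_add_right)
  ultimately show ?thesis
    using g_mid quadratic_form_midpoint[of u v "H i y"] unfolding model_def by simp argo
qed

lemma model_max_midpoint_le:
  assumes "in_dom (y + u)" "in_dom (y + v)"
  shows "model_max y ((u + v) /\<^sub>R 2) \<le> (model_max y u + model_max y v) / 2 - \<mu> / 8 * (norm (u - v))\<^sup>2"
proof -
  obtain i where i: "i \<in> {1..m}" "model_max y ((u + v) /\<^sub>R 2) = model y i ((u + v) /\<^sub>R 2)"
    using model_max_attained by blast
  then show ?thesis
    using model_midpoint_le[OF i(1) assms] model_le_model_max[OF i(1), of y u]
      model_le_model_max[OF i(1), of y v] by argo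
qed

lemma model_max_direction_margin:
  assumes "in_dom (x k + v)"
  shows "model_max (x k) (d k) + \<mu> / 4 * (norm (v - d k))\<^sup>2 \<le> model_max (x k) v"
proof -
  have "model_max (x k) (d k) \<le> model_max (x k) ((d k + v) /\<^sub>R 2)"
    by (intro direction_minimizes_model_max in_dom_midpoint in_dom_direction assms)
  with model_max_midpoint_le[OF in_dom_direction assms] show ?thesis
    by (simp add: norm_minus_commute) argo
qed

lemma model_max_direction_le: "model_max (x k) (d k) \<le> - (\<mu> / 4 * (norm (d k))\<^sup>2)"
  using model_max_direction_margin[of k 0] in_dom_iterate by (simp add: model_max_zero)

lemma Freal_iterate_decseq: "i \<in> {1..m} \<Longrightarrow> decseq (\<lambda>k. Freal i (x k))"
proof (rule decseq_SucI)
  fix k assume "i \<in> {1..m}"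
  moreover have "t k * \<sigma> * model_max (x k) (d k) \<le> 0"
    using model_max_direction_le[of k] step_pos[of k] sigma mu_pos
    by (intro mult_nonneg_nonpos) (auto intro: order_trans)
  ultimately show "Freal i (x (Suc k)) \<le> Freal i (x k)"
    using armijo_decrease[of i k] by linarith
qed

lemma Fcomp_limit_le:
  assumes i: "i \<in> {1..m}"
  shows "Fcomp f g i xstar \<le> ereal (Freal i (x k))"
proof -
  have "continuous_on UNIV (f i)"
    using f_grad i by (intro continuous_at_imp_continuous_on) (blast intro: has_derivative_continuous)
  then have "lsc_fun (Fcomp f g i)"
    using lsc_fun_add_continuous[of "g i" "f i"] g_lsc i by (simp add: Fcomp_def[abs_def])
  moreover have "\<forall>\<^sub>F j in sequentially. Fcomp f g i (x j) \<le> ereal (Freal i (x k))"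
    unfolding eventually_sequentially
    using Fcomp_eq_ereal[OF i] in_dom_iterate i decseqD[OF Freal_iterate_decseq[OF i]] by force
  ultimately show ?thesis by (rule lsc_fun_limit_le[OF _ lim])
qed

lemma in_dom_limit: "in_dom xstar"
  using Fcomp_limit_le[of _ 0] by (force simp: Fcomp_def)

lemma Freal_limit_le: "i \<in> {1..m} \<Longrightarrow> Freal i xstar \<le> Freal i (x k)"
  using Fcomp_limit_le[of i k] Fcomp_eq_ereal[of i xstar] in_dom_limit by simp

lemma taylor_remainder_small_uniform:
  assumes "0 < \<eta>"
  obtains r where "r > 0"
    "\<And>i y w. i \<in> {1..m} \<Longrightarrow> dist y xstar < r \<Longrightarrow> dist (y + w) xstar < r \<Longrightarrow>
       \<bar>f i (y + w) - f i y - Df i y \<bullet> w - (w \<bullet> (H i y *v w)) / 2\<bar> \<le> \<eta> * (norm w)\<^sup>2"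
proof -
  have "\<forall>i\<in>{1..m}. \<forall>\<^sub>F r in at_right 0. \<forall>y w. dist y xstar < r \<longrightarrow> dist (y + w) xstar < r \<longrightarrow>
          \<bar>f i (y + w) - f i y - Df i y \<bullet> w - (w \<bullet> (H i y *v w)) / 2\<bar> \<le> \<eta> * (norm w)\<^sup>2"
  proof
    fix i assume i: "i \<in> {1..m}"
    have "isCont (H i) xstar" using hess_cont i by (simp add: continuous_on_eq_continuous_at)
    with i show "\<forall>\<^sub>F r in at_right 0. \<forall>y w. dist y xstar < r \<longrightarrow> dist (y + w) xstar < r \<longrightarrow>
          \<bar>f i (y + w) - f i y - Df i y \<bullet> w - (w \<bullet> (H i y *v w)) / 2\<bar> \<le> \<eta> * (norm w)\<^sup>2"
      using f_grad f_hess assms by (intro taylor_second_order_remainder_small) auto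
  qed
  then have "\<forall>\<^sub>F r in at_right 0. \<forall>i\<in>{1..m}. \<forall>y w. dist y xstar < r \<longrightarrow> dist (y + w) xstar < r \<longrightarrow>
          \<bar>f i (y + w) - f i y - Df i y \<bullet> w - (w \<bullet> (H i y *v w)) / 2\<bar> \<le> \<eta> * (norm w)\<^sup>2"
    by (simp add: eventually_ball_finite)
  then obtain b where b: "b > 0" "\<forall>r>0. r < b \<longrightarrow> (\<forall>i\<in>{1..m}. \<forall>y w. dist y xstar < r \<longrightarrow> dist (y + w) xstar < r \<longrightarrow>
          \<bar>f i (y + w) - f i y - Df i y \<bullet> w - (w \<bullet> (H i y *v w)) / 2\<bar> \<le> \<eta> * (norm w)\<^sup>2)"
    unfolding eventually_at_right_field by auto
  then show ?thesis using b(2)[rule_format, of "b / 2"] by (intro that[of "b / 2"]) auto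
qed

text \<open>The Taylor error \<open>(1 - \<sigma>) \<mu> / 4 s\<^sup>2 \<parallel>d k\<parallel>\<^sup>2\<close> is absorbed by the slack
  \<open>(1 - \<sigma>) s model_max \<le> -(1 - \<sigma>) \<mu> / 4 s \<parallel>d k\<parallel>\<^sup>2\<close> left by the Armijo factor \<sigma>.\<close>

lemma armijo_of_taylor_bound:
  assumes i: "i \<in> {1..m}" and s: "0 < s" "s \<le> 1"
    and taylor: "f i (x k + s *\<^sub>R d k) - f i (x k)
      \<le> s * (Df i (x k) \<bullet> d k) + s\<^sup>2 * (d k \<bullet> (H i (x k) *v d k)) / 2 + (1 - \<sigma>) * \<mu> / 4 * s\<^sup>2 * (norm (d k))\<^sup>2"
  shows "g i (x k + s *\<^sub>R d k) \<noteq> \<infinity>"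
    and "Freal i (x k + s *\<^sub>R d k) - Freal i (x k) \<le> s * \<sigma> * model_max (x k) (d k)"
proof -
  define Q where "Q = d k \<bullet> (H i (x k) *v d k)"
  define n2 where "n2 = (norm (d k))\<^sup>2"
  define \<phi> where "\<phi> = model_max (x k) (d k)"
  have line: "(1 - s) *\<^sub>R x k + s *\<^sub>R (x k + d k) = x k + s *\<^sub>R d k"
    by (simp add: algebra_simps)
  show "g i (x k + s *\<^sub>R d k) \<noteq> \<infinity>"
    using greal_convex(1)[OF i, of "x k" "x k + d k" s] line in_dom_iterate in_dom_direction i s by simp
  have g_line: "greal i (x k + s *\<^sub>R d k) \<le> (1 - s) * greal i (x k) + s * greal i (x k + d k)"
    using greal_convex(2)[OF i, of "x k" "x k + d k" s] line in_dom_iterate in_dom_direction i s by simp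
  have "s * (Df i (x k) \<bullet> d k + greal i (x k + d k) - greal i (x k) + Q / 2) \<le> s * \<phi>"
    using model_le_model_max[OF i, of "x k" "d k"] s unfolding model_def Q_def \<phi>_def
    by (intro mult_left_mono) auto
  then have model_step: "s * (Df i (x k) \<bullet> d k) + s * greal i (x k + d k) - s * greal i (x k) + s * Q / 2 \<le> s * \<phi>"
    by (simp add: algebra_simps)
  have s_sq: "s\<^sup>2 \<le> s" using s by (simp add: power2_eq_square mult_left_le)
  have "\<mu> * (d k \<bullet> d k) \<le> Q" using strongly_convex i unfolding Q_def by blast
  moreover have "0 \<le> \<mu> * (d k \<bullet> d k)" using mu_pos by simp
  ultimately have "0 \<le> Q" by linarith
  then have curvature: "s\<^sup>2 * Q \<le> s * Q" using s_sq by (rule mult_right_mono[rotated])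
  have "\<mu> / 4 * n2 \<le> - \<phi>" using model_max_direction_le[of k] unfolding \<phi>_def n2_def by simp
  then have "s\<^sup>2 * (\<mu> / 4 * n2) \<le> s * (- \<phi>)"
    using s_sq s mu_pos by (intro mult_mono) (auto simp: n2_def)
  then have "(1 - \<sigma>) * (s\<^sup>2 * (\<mu> / 4 * n2)) \<le> (1 - \<sigma>) * (s * (- \<phi>))"
    using sigma by (intro mult_left_mono) auto
  then have slack: "(1 - \<sigma>) * \<mu> / 4 * s\<^sup>2 * n2 \<le> s * \<sigma> * \<phi> - s * \<phi>"
    by (simp add: algebra_simps)
  have "(1 - s) * greal i (x k) = greal i (x k) - s * greal i (x k)" by (simp add: algebra_simps)
  with taylor g_line model_step curvature slack
  show "Freal i (x k + s *\<^sub>R d k) - Freal i (x k) \<le> s * \<sigma> * \<phi>"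
    unfolding Freal_def Q_def n2_def by linarith
qed

lemma armijo_near_limit:
  obtains r where "r > 0"
    "\<And>k s i. dist (x k) xstar < r \<Longrightarrow> 0 < s \<Longrightarrow> s \<le> 1 \<Longrightarrow> s * norm (d k) < r \<Longrightarrow> i \<in> {1..m} \<Longrightarrow>
       g i (x k + s *\<^sub>R d k) \<noteq> \<infinity> \<and>
       Freal i (x k + s *\<^sub>R d k) - Freal i (x k) \<le> s * \<sigma> * model_max (x k) (d k)"
proof -
  have "0 < (1 - \<sigma>) * \<mu> / 4" using sigma mu_pos by simp
  then obtain r where r: "r > 0" and taylor: "\<And>i y w. i \<in> {1..m} \<Longrightarrow> dist y xstar < r \<Longrightarrow>
      dist (y + w) xstar < r \<Longrightarrow>
      \<bar>f i (y + w) - f i y - Df i y \<bullet> w - (w \<bullet> (H i y *v w)) / 2\<bar> \<le> (1 - \<sigma>) * \<mu> / 4 * (norm w)\<^sup>2"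
    using taylor_remainder_small_uniform by blast
  show ?thesis
  proof (rule that[of "r / 2"])
    fix k s i assume near: "dist (x k) xstar < r / 2" and s: "0 < s" "s \<le> 1"
      and short: "s * norm (d k) < r / 2" and i: "i \<in> {1..m}"
    have "dist (x k + s *\<^sub>R d k) xstar \<le> dist (x k) xstar + s * norm (d k)"
      using s dist_triangle[of "x k + s *\<^sub>R d k" xstar "x k"] by (simp add: dist_norm)
    moreover have "dist (x k) xstar < r" using near zero_le_dist[of "x k" xstar] by linarith
    ultimately have "\<bar>f i (x k + s *\<^sub>R d k) - f i (x k) - Df i (x k) \<bullet> (s *\<^sub>R d k)
        - ((s *\<^sub>R d k) \<bullet> (H i (x k) *v (s *\<^sub>R d k))) / 2\<bar> \<le> (1 - \<sigma>) * \<mu> / 4 * (norm (s *\<^sub>R d k))\<^sup>2"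
      using near short by (intro taylor[OF i]) auto
    moreover have "Df i (x k) \<bullet> (s *\<^sub>R d k) = s * (Df i (x k) \<bullet> d k)"
      and "(s *\<^sub>R d k) \<bullet> (H i (x k) *v (s *\<^sub>R d k)) = s\<^sup>2 * (d k \<bullet> (H i (x k) *v d k))"
      and "(1 - \<sigma>) * \<mu> / 4 * (norm (s *\<^sub>R d k))\<^sup>2 = (1 - \<sigma>) * \<mu> / 4 * s\<^sup>2 * (norm (d k))\<^sup>2"
      using s by (simp_all add: matrix_vector_mult_scaleR power_mult_distrib power2_eq_square)
    ultimately have "f i (x k + s *\<^sub>R d k) - f i (x k)
      \<le> s * (Df i (x k) \<bullet> d k) + s\<^sup>2 * (d k \<bullet> (H i (x k) *v d k)) / 2 + (1 - \<sigma>) * \<mu> / 4 * s\<^sup>2 * (norm (d k))\<^sup>2"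
      by (simp only: abs_le_iff) linarith
    then show "g i (x k + s *\<^sub>R d k) \<noteq> \<infinity> \<and>
       Freal i (x k + s *\<^sub>R d k) - Freal i (x k) \<le> s * \<sigma> * model_max (x k) (d k)"
      using armijo_of_taylor_bound[OF i s] by blast
  qed (use r in simp)
qed

lemma step_bounds_near_limit:
  obtains r where "r > 0"
    "\<And>k. dist (x k) xstar < r \<Longrightarrow> \<gamma> * min 1 (r / (2 * norm (d k))) < t k"
    "\<And>k. dist (x k) xstar < r \<Longrightarrow> norm (d k) < r \<Longrightarrow> t k = 1"
proof -
  obtain r where r: "r > 0" and armijo: "\<And>k s i. dist (x k) xstar < r \<Longrightarrow> 0 < s \<Longrightarrow> s \<le> 1 \<Longrightarrow>
      s * norm (d k) < r \<Longrightarrow> i \<in> {1..m} \<Longrightarrow> g i (x k + s *\<^sub>R d k) \<noteq> \<infinity> \<and>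
      Freal i (x k + s *\<^sub>R d k) - Freal i (x k) \<le> s * \<sigma> * model_max (x k) (d k)"
    using armijo_near_limit by blast
  show ?thesis
  proof (rule that[OF r])
    fix k assume near: "dist (x k) xstar < r"
    define a where "a = min 1 (r / (2 * norm (d k)))"
    have nd: "norm (d k) > 0" using not_crit by simp
    have a: "0 < a" "a \<le> 1" using r nd by (auto simp: a_def)
    have "a * norm (d k) \<le> r / (2 * norm (d k)) * norm (d k)"
      unfolding a_def using nd by (intro mult_right_mono) auto
    then have short: "a * norm (d k) < r" using nd r by simp
    obtain j where j: "\<gamma> ^ j \<le> a" "\<gamma> * a < \<gamma> ^ j"
      using exists_power_between[OF gamma a] by blast
    have "\<gamma> ^ j * norm (d k) < r"
      using mult_right_mono[OF j(1), of "norm (d k)"] short by simp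
    then have "\<gamma> ^ j \<le> t k"
      using armijo[OF near] j(1) a(2) gamma by (intro armijo_power_le_step) auto
    with j(2) show "\<gamma> * min 1 (r / (2 * norm (d k))) < t k" unfolding a_def by simp
  next
    fix k assume "dist (x k) xstar < r" "norm (d k) < r"
    then have "\<gamma> ^ 0 \<le> t k" using armijo[of k 1] by (intro armijo_power_le_step) auto
    then show "t k = 1" using step_le_one[of k] by simp
  qed
qed

lemma step_norm_sq_tendsto_zero: "(\<lambda>k. t k * (norm (d k))\<^sup>2) \<longlonglongrightarrow> 0"
proof -
  have one: "1 \<in> {1..m}" using m by simp
  define X where "X k = Freal 1 (x k)" for k
  have "decseq X" unfolding X_def by (rule Freal_iterate_decseq[OF one])
  moreover have "\<forall>k. Freal 1 xstar \<le> X k" unfolding X_def using Freal_limit_le[OF one] by blast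
  ultimately obtain L where L: "X \<longlonglongrightarrow> L" by (rule decseq_convergent)
  have upper_lim: "(\<lambda>k. 4 / (\<sigma> * \<mu>) * (X k - X (Suc k))) \<longlonglongrightarrow> 4 / (\<sigma> * \<mu>) * (L - L)"
    by (intro tendsto_mult_left tendsto_diff L LIMSEQ_Suc[OF L])
  have upper: "t k * (norm (d k))\<^sup>2 \<le> 4 / (\<sigma> * \<mu>) * (X k - X (Suc k))" for k
  proof -
    have "X (Suc k) - X k \<le> t k * \<sigma> * model_max (x k) (d k)"
      unfolding X_def by (rule armijo_decrease[OF one])
    also have "\<dots> \<le> t k * \<sigma> * (- (\<mu> / 4 * (norm (d k))\<^sup>2))"
      using model_max_direction_le[of k] step_pos[of k] sigma by (intro mult_left_mono) auto
    finally have "\<sigma> * \<mu> / 4 * (t k * (norm (d k))\<^sup>2) \<le> X k - X (Suc k)"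
      by (simp add: algebra_simps)
    then have "4 / (\<sigma> * \<mu>) * (\<sigma> * \<mu> / 4 * (t k * (norm (d k))\<^sup>2)) \<le> 4 / (\<sigma> * \<mu>) * (X k - X (Suc k))"
      using sigma mu_pos by (intro mult_left_mono) auto
    then show ?thesis using sigma mu_pos by simp
  qed
  have nonneg: "0 \<le> t k * (norm (d k))\<^sup>2" for k using step_pos[of k] by simp
  show ?thesis
    by (rule tendsto_sandwich[of "\<lambda>_. 0" _ _ "\<lambda>k. 4 / (\<sigma> * \<mu>) * (X k - X (Suc k))"])
      (use upper nonneg upper_lim in simp_all)
qed

lemma direction_tendsto_zero: "d \<longlonglongrightarrow> 0"
proof -
  obtain r where r: "r > 0" and lower: "\<And>k. dist (x k) xstar < r \<Longrightarrow> \<gamma> * min 1 (r / (2 * norm (d k))) < t k"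
    by (rule step_bounds_near_limit) blast
  define c where "c k = t k * (norm (d k))\<^sup>2 / \<gamma>" for k
  have bound: "norm (d k) \<le> sqrt (c k) + c k / (r / 2)" if near: "dist (x k) xstar < r" for k
  proof (rule le_of_min_square_le)
    have nd: "norm (d k) > 0" using not_crit by simp
    have "min 1 (r / (2 * norm (d k))) * \<gamma> \<le> t k" using lower[OF near] by (simp add: mult.commute)
    then have "min 1 (r / (2 * norm (d k))) \<le> t k / \<gamma>" using gamma by (simp add: pos_le_divide_eq)
    then have "min 1 (r / (2 * norm (d k))) * (norm (d k))\<^sup>2 \<le> t k / \<gamma> * (norm (d k))\<^sup>2"
      by (rule mult_right_mono) simp
    moreover have "min ((norm (d k))\<^sup>2) (r / 2 * norm (d k)) = min 1 (r / (2 * norm (d k))) * (norm (d k))\<^sup>2"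
      using nd by (simp add: min_mult_distrib_right power2_eq_square)
    ultimately show "min ((norm (d k))\<^sup>2) (r / 2 * norm (d k)) \<le> c k" by (simp add: c_def)
  qed (use r in simp_all)
  have "\<forall>\<^sub>F k in sequentially. dist (x k) xstar < r" using lim r by (rule tendstoD)
  then have bound_ev: "\<forall>\<^sub>F k in sequentially. norm (d k) \<le> sqrt (c k) + c k / (r / 2)"
    by eventually_elim (rule bound)
  have "c \<longlonglongrightarrow> 0"
    unfolding c_def[abs_def] using step_norm_sq_tendsto_zero by (rule tendsto_divide_zero)
  then have upper: "(\<lambda>k. sqrt (c k) + c k / (r / 2)) \<longlonglongrightarrow> 0"
    using tendsto_real_sqrt[of c 0] by (intro tendsto_add_zero tendsto_divide_zero) simp_all
  have "(\<lambda>k. norm (d k)) \<longlonglongrightarrow> 0"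
  proof (rule tendsto_sandwich[of "\<lambda>_. 0" _ _ "\<lambda>k. sqrt (c k) + c k / (r / 2)"])
    show "\<forall>\<^sub>F k in sequentially. 0 \<le> norm (d k)" by simp
  qed (use bound_ev upper in simp_all)
  then show ?thesis by (rule tendsto_norm_zero_cancel)
qed

lemma eventually_unit_step: "\<forall>\<^sub>F k in sequentially. t k = 1"
proof -
  obtain r where r: "r > 0" and unit: "\<And>k. dist (x k) xstar < r \<Longrightarrow> norm (d k) < r \<Longrightarrow> t k = 1"
    by (rule step_bounds_near_limit) blast
  have "\<forall>\<^sub>F k in sequentially. dist (x k) xstar < r" using lim r by (rule tendstoD)
  moreover have "\<forall>\<^sub>F k in sequentially. dist (d k) 0 < r" using direction_tendsto_zero r by (rule tendstoD)
  ultimately show ?thesis by eventually_elim (simp add: unit)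
qed

lemma eventually_error_step_estimate:
  assumes \<eta>: "0 < \<eta>"
  shows "\<forall>\<^sub>F k in sequentially. t k = 1 \<and>
    \<mu> / 4 * (norm (x (Suc k) - xstar))\<^sup>2 \<le> \<eta> * ((norm (x k - xstar))\<^sup>2 + (norm (d k))\<^sup>2)"
proof -
  obtain r where r: "r > 0" and taylor: "\<And>i y w. i \<in> {1..m} \<Longrightarrow> dist y xstar < r \<Longrightarrow>
      dist (y + w) xstar < r \<Longrightarrow>
      \<bar>f i (y + w) - f i y - Df i y \<bullet> w - (w \<bullet> (H i y *v w)) / 2\<bar> \<le> \<eta> * (norm w)\<^sup>2"
    using taylor_remainder_small_uniform[OF \<eta>] by blast
  have "\<forall>\<^sub>F k in sequentially. dist (x k) xstar < r / 2" using lim r by (intro tendstoD) auto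
  moreover have "\<forall>\<^sub>F k in sequentially. dist (d k) 0 < r / 2"
    using direction_tendsto_zero r by (intro tendstoD) auto
  ultimately show ?thesis using eventually_unit_step
  proof eventually_elim
    case (elim k)
    define y where "y = x k"
    define v where "v = xstar - y"
    have next_eq: "x (Suc k) = y + d k" using update elim by (simp add: y_def)
    have y_near: "dist y xstar < r" using elim(1) zero_le_dist[of y xstar] unfolding y_def by linarith
    have "dist (y + d k) xstar \<le> dist y xstar + norm (d k)"
      using dist_triangle[of "y + d k" xstar y] by (simp add: dist_norm)
    then have yd_near: "dist (y + d k) xstar < r" using elim(1,2) unfolding y_def by simp
    obtain i where i: "i \<in> {1..m}" "model_max y v = model y i v"
      using model_max_attained by blast
    have "model_max y (d k) + \<mu> / 4 * (norm (v - d k))\<^sup>2 \<le> model_max y v"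
      using model_max_direction_margin[of k v] in_dom_limit by (simp add: y_def v_def)
    moreover have "model y i (d k) \<le> model_max y (d k)" by (rule model_le_model_max[OF i(1)])
    moreover have "Df i y \<bullet> v + (v \<bullet> (H i y *v v)) / 2 \<le> f i xstar - f i y + \<eta> * (norm v)\<^sup>2"
      using taylor[OF i(1) y_near, of v] r by (simp add: v_def abs_le_iff)
    moreover have "f i (y + d k) - f i y \<le> Df i y \<bullet> d k + (d k \<bullet> (H i y *v d k)) / 2 + \<eta> * (norm (d k))\<^sup>2"
      using taylor[OF i(1) y_near yd_near] by (simp add: abs_le_iff)
    moreover have "Freal i xstar \<le> Freal i (y + d k)"
      using Freal_limit_le[OF i(1), of "Suc k"] next_eq by simp
    ultimately have "\<mu> / 4 * (norm (v - d k))\<^sup>2 \<le> \<eta> * (norm v)\<^sup>2 + \<eta> * (norm (d k))\<^sup>2"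
      using i(2) unfolding model_def Freal_def by (simp add: v_def)
    moreover have "norm (v - d k) = norm (x (Suc k) - xstar)"
      unfolding next_eq v_def by (metis add_diff_cancel_left' diff_diff_eq2 minus_diff_eq norm_minus_cancel)
    moreover have "norm v = norm (x k - xstar)" by (simp add: v_def y_def norm_minus_commute)
    ultimately show ?case using elim(3) by (simp add: distrib_left)
  qed
qed

lemma eventually_error_recursion:
  assumes "0 < \<eta>"
  shows "\<forall>\<^sub>F k in sequentially. t k = 1 \<and>
    (\<mu> / 4 - 2 * \<eta>) * (norm (x (Suc k) - xstar))\<^sup>2 \<le> 3 * \<eta> * (norm (x k - xstar))\<^sup>2"
  using eventually_error_step_estimate[OF assms]
proof eventually_elim
  case (elim k)
  define E where "E = norm (x (Suc k) - xstar)"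
  define V where "V = norm (x k - xstar)"
  have "d k = (x (Suc k) - xstar) - (x k - xstar)" using update elim by simp
  then have "norm (d k) \<le> E + V" unfolding E_def V_def by (metis norm_triangle_ineq4)
  then have "(norm (d k))\<^sup>2 \<le> (E + V)\<^sup>2" by (intro power_mono) auto
  moreover have "(E + V)\<^sup>2 \<le> 2 * E\<^sup>2 + 2 * V\<^sup>2"
    using zero_le_power2[of "E - V"] unfolding power2_sum power2_diff by linarith
  ultimately have "(norm (d k))\<^sup>2 \<le> 2 * E\<^sup>2 + 2 * V\<^sup>2" by linarith
  then have "\<eta> * (norm (d k))\<^sup>2 \<le> \<eta> * (2 * E\<^sup>2 + 2 * V\<^sup>2)" using assms by (simp add: mult_left_mono)
  then show ?case using elim unfolding E_def[symmetric] V_def[symmetric] by (simp add: algebra_simps)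
qed

lemma eventually_iterate_ne_limit: "\<forall>\<^sub>F k in sequentially. x k \<noteq> xstar"
proof -
  have "0 < \<mu> / 16" using mu_pos by simp
  from eventually_error_recursion[OF this]
  show ?thesis
  proof eventually_elim
    case (elim k)
    show ?case
    proof
      assume at_limit: "x k = xstar"
      with elim have "\<mu> / 8 * (norm (x (Suc k) - xstar))\<^sup>2 \<le> 0" by simp
      then have "x (Suc k) = x k" using mu_pos at_limit by (simp add: mult_le_0_iff)
      then show False using update elim not_crit by simp
    qed
  qed
qed

lemma superlinear_convergence: "(\<lambda>k. norm (x (Suc k) - xstar) / norm (x k - xstar)) \<longlonglongrightarrow> 0"
proof (rule order_tendstoI)
  fix a :: real assume "a < 0"
  then show "\<forall>\<^sub>F k in sequentially. a < norm (x (Suc k) - xstar) / norm (x k - xstar)"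
    by (simp add: less_le_trans)
next
  fix \<epsilon> :: real assume \<epsilon>: "0 < \<epsilon>"
  define \<eta> where "\<eta> = min (\<mu> / 16) (\<epsilon>\<^sup>2 * \<mu> / 96)"
  have \<eta>: "0 < \<eta>" using \<epsilon> mu_pos by (simp add: \<eta>_def)
  have \<eta>_le: "\<eta> \<le> \<mu> / 16" "\<eta> \<le> \<epsilon>\<^sup>2 * \<mu> / 96" by (simp_all add: \<eta>_def)
  from eventually_error_recursion[OF \<eta>] eventually_iterate_ne_limit
  show "\<forall>\<^sub>F k in sequentially. norm (x (Suc k) - xstar) / norm (x k - xstar) < \<epsilon>"
  proof eventually_elim
    case (elim k)
    define E where "E = norm (x (Suc k) - xstar)"
    define V where "V = norm (x k - xstar)"
    have V: "V > 0" using elim by (simp add: V_def)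
    have "\<mu> / 8 * E\<^sup>2 \<le> (\<mu> / 4 - 2 * \<eta>) * E\<^sup>2" using \<eta>_le by (intro mult_right_mono) auto
    also have "\<dots> \<le> 3 * \<eta> * V\<^sup>2" using elim by (simp add: E_def V_def)
    also have "\<dots> \<le> 3 * (\<epsilon>\<^sup>2 * \<mu> / 96) * V\<^sup>2"
      by (rule mult_right_mono) (use \<eta>_le(2) in linarith, simp)
    finally have "E\<^sup>2 \<le> (\<epsilon> / 2 * V)\<^sup>2" using mu_pos by (simp add: power_mult_distrib power_divide)
    then have "E \<le> \<epsilon> / 2 * V" by (rule power2_le_imp_le) (use \<epsilon> V in simp)
    moreover have "\<epsilon> / 2 * V < \<epsilon> * V" using \<epsilon> V by simp
    ultimately have "E < \<epsilon> * V" by linarith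
    then show ?case using V by (simp add: E_def V_def divide_less_eq)
  qed
qed

end

section \<open>Step-length bounds from superlinear convergence\<close>

lemma step_ratio_bounds:
  fixes a b c :: "'a::real_normed_vector"
  assumes "a \<noteq> c"
  shows "1 - norm (b - c) / norm (a - c) \<le> norm (b - a) / norm (a - c)"
    and "norm (b - a) / norm (a - c) \<le> 1 + norm (b - c) / norm (a - c)"
proof -
  have pos: "norm (a - c) > 0" using assms by simp
  have "norm (a - c) \<le> norm (b - a) + norm (b - c)"
    by (metis dist_norm dist_triangle3)
  then have "(norm (a - c) - norm (b - c)) / norm (a - c) \<le> norm (b - a) / norm (a - c)"
    by (intro divide_right_mono) auto
  then show "1 - norm (b - c) / norm (a - c) \<le> norm (b - a) / norm (a - c)"
    using pos by (simp add: diff_divide_distrib)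
  have "norm (b - a) \<le> norm (b - c) + norm (a - c)"
    by (metis dist_norm dist_triangle2)
  then have "norm (b - a) / norm (a - c) \<le> (norm (b - c) + norm (a - c)) / norm (a - c)"
    by (intro divide_right_mono) auto
  then show "norm (b - a) / norm (a - c) \<le> 1 + norm (b - c) / norm (a - c)"
    using pos by (simp add: add_divide_distrib)
qed

lemma error_bounds_of_small_ratio:
  fixes a b c :: "'a::real_normed_vector" and \<epsilon> \<mu> :: real
  defines "s \<equiv> sqrt (2 * \<mu> * \<epsilon> - \<epsilon>\<^sup>2)"
  assumes ac: "a \<noteq> c" and \<epsilon>: "0 < \<epsilon>" "\<epsilon> < \<mu>"
    and small: "norm (b - c) / norm (a - c) \<le> (s - \<epsilon>) / (\<mu> - \<epsilon>)"
      "norm (b - c) / norm (a - c) \<le> sqrt (\<epsilon> / \<mu>)"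
  shows "let \<tau> = norm (b - a) / norm (a - c) in
           norm (b - c) \<le> sqrt (\<epsilon> * (1 + \<tau>\<^sup>2) / \<mu>) * norm (a - c)
           \<and> (\<mu> - s) / (\<mu> - \<epsilon>) \<le> \<tau> \<and> \<tau> \<le> (\<mu> + s) / (\<mu> - \<epsilon>)"
proof -
  define \<rho> where "\<rho> = norm (b - c) / norm (a - c)"
  define \<tau> where "\<tau> = norm (b - a) / norm (a - c)"
  have pos: "norm (a - c) > 0" using ac by simp
  have "(\<mu> - s) / (\<mu> - \<epsilon>) = 1 - (s - \<epsilon>) / (\<mu> - \<epsilon>)" and "(\<mu> + s) / (\<mu> - \<epsilon>) = 1 + (s + \<epsilon>) / (\<mu> - \<epsilon>)"
    using \<epsilon> by (simp_all add: field_simps)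
  moreover have "(s - \<epsilon>) / (\<mu> - \<epsilon>) \<le> (s + \<epsilon>) / (\<mu> - \<epsilon>)"
    using \<epsilon> by (intro divide_right_mono) auto
  ultimately have "(\<mu> - s) / (\<mu> - \<epsilon>) \<le> \<tau> \<and> \<tau> \<le> (\<mu> + s) / (\<mu> - \<epsilon>)"
    using step_ratio_bounds[OF ac, of b] small(1) unfolding \<rho>_def \<tau>_def by linarith
  moreover have "\<rho> \<le> sqrt (\<epsilon> * (1 + \<tau>\<^sup>2) / \<mu>)"
  proof -
    have "\<epsilon> / \<mu> \<le> \<epsilon> * (1 + \<tau>\<^sup>2) / \<mu>" using \<epsilon> by (intro divide_right_mono) auto
    then show ?thesis using small(2) unfolding \<rho>_def by (meson order_trans real_sqrt_le_mono)
  qed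
  then have "norm (b - c) \<le> sqrt (\<epsilon> * (1 + \<tau>\<^sup>2) / \<mu>) * norm (a - c)"
    using pos by (simp add: \<rho>_def divide_le_eq)
  ultimately show ?thesis unfolding \<tau>_def Let_def by blast
qed

lemma superlinear_imp_error_bounds:
  fixes x :: "nat \<Rightarrow> 'a::real_normed_vector" and \<epsilon> \<mu> :: real
  assumes ratio: "(\<lambda>k. norm (x (Suc k) - xstar) / norm (x k - xstar)) \<longlonglongrightarrow> 0"
    and neq: "\<forall>\<^sub>F k in sequentially. x k \<noteq> xstar"
    and \<epsilon>: "0 < \<epsilon>" "\<epsilon> < \<mu>"
  shows "\<exists>K::nat. K > 0 \<and> (\<forall>k\<ge>K.
           (let \<tau> = norm (x (Suc k) - x k) / norm (x k - xstar) in
              norm (x (Suc k) - xstar) \<le> sqrt (\<epsilon> * (1 + \<tau>\<^sup>2) / \<mu>) * norm (x k - xstar)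
              \<and> (\<mu> - sqrt (2 * \<mu> * \<epsilon> - \<epsilon>\<^sup>2)) / (\<mu> - \<epsilon>) \<le> \<tau>
              \<and> \<tau> \<le> (\<mu> + sqrt (2 * \<mu> * \<epsilon> - \<epsilon>\<^sup>2)) / (\<mu> - \<epsilon>)))"
proof -
  define s where "s = sqrt (2 * \<mu> * \<epsilon> - \<epsilon>\<^sup>2)"
  have "\<epsilon>\<^sup>2 < 2 * \<mu> * \<epsilon> - \<epsilon>\<^sup>2"
    using \<epsilon> mult_strict_right_mono[of \<epsilon> \<mu> \<epsilon>] by (simp add: power2_eq_square)
  then have "\<epsilon> < s" unfolding s_def by (rule real_less_rsqrt)
  then have "0 < min ((s - \<epsilon>) / (\<mu> - \<epsilon>)) (sqrt (\<epsilon> / \<mu>))" using \<epsilon> by simp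
  from order_tendstoD(2)[OF ratio this] have "\<forall>\<^sub>F k in sequentially.
      norm (x (Suc k) - xstar) / norm (x k - xstar) < min ((s - \<epsilon>) / (\<mu> - \<epsilon>)) (sqrt (\<epsilon> / \<mu>))" .
  with neq have "\<forall>\<^sub>F k in sequentially. k > 0 \<and> x k \<noteq> xstar \<and>
      norm (x (Suc k) - xstar) / norm (x k - xstar) < min ((s - \<epsilon>) / (\<mu> - \<epsilon>)) (sqrt (\<epsilon> / \<mu>))"
    using eventually_gt_at_top[of 0] by eventually_elim blast
  then obtain K where K: "\<And>k. k \<ge> K \<Longrightarrow> k > 0 \<and> x k \<noteq> xstar \<and>
      norm (x (Suc k) - xstar) / norm (x k - xstar) < min ((s - \<epsilon>) / (\<mu> - \<epsilon>)) (sqrt (\<epsilon> / \<mu>))"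
    unfolding eventually_sequentially by blast
  show ?thesis
  proof (intro exI[of _ K] conjI allI impI)
    show "K > 0" using K by blast
    fix k assume "K \<le> k"
    with K have "x k \<noteq> xstar"
      and "norm (x (Suc k) - xstar) / norm (x k - xstar) \<le> (s - \<epsilon>) / (\<mu> - \<epsilon>)"
      and "norm (x (Suc k) - xstar) / norm (x k - xstar) \<le> sqrt (\<epsilon> / \<mu>)"
      by (auto dest: less_imp_le)
    from error_bounds_of_small_ratio[OF this(1) \<epsilon> this(2-3)[unfolded s_def]]
    show "let \<tau> = norm (x (Suc k) - x k) / norm (x k - xstar) in
              norm (x (Suc k) - xstar) \<le> sqrt (\<epsilon> * (1 + \<tau>\<^sup>2) / \<mu>) * norm (x k - xstar)
              \<and> (\<mu> - sqrt (2 * \<mu> * \<epsilon> - \<epsilon>\<^sup>2)) / (\<mu> - \<epsilon>) \<le> \<tau>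
              \<and> \<tau> \<le> (\<mu> + sqrt (2 * \<mu> * \<epsilon> - \<epsilon>\<^sup>2)) / (\<mu> - \<epsilon>)" .
  qed
qed

theorem theorem4:
  fixes m :: nat
    and f :: "nat \<Rightarrow> real^'n \<Rightarrow> real"
    and Df :: "nat \<Rightarrow> real^'n \<Rightarrow> real^'n"
    and H :: "nat \<Rightarrow> real^'n \<Rightarrow> real^'n^'n"
    and g :: "nat \<Rightarrow> real^'n \<Rightarrow> ereal"
    and \<mu> \<sigma> \<gamma> :: real
    and x d :: "nat \<Rightarrow> real^'n"
    and \<theta> :: "nat \<Rightarrow> ereal"
    and t :: "nat \<Rightarrow> real"
    and xstar :: "real^'n"
  assumes m: "m \<ge> 1"
    and g_proper: "\<forall>i\<in>{1..m}. proper_fun (g i)"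
    and g_convex: "\<forall>i\<in>{1..m}. ereal_convex (g i)"
    and g_lsc: "\<forall>i\<in>{1..m}. lsc_fun (g i)"
    and f_grad: "\<forall>i\<in>{1..m}. \<forall>y. (f i has_derivative (\<lambda>v. Df i y \<bullet> v)) (at y)"
    and f_hess: "\<forall>i\<in>{1..m}. \<forall>y. (Df i has_derivative (\<lambda>v. H i y *v v)) (at y)"
    and hess_cont: "\<forall>i\<in>{1..m}. continuous_on UNIV (H i)"
    and mu_pos: "\<mu> > 0"
    and strongly_convex: "\<forall>i\<in>{1..m}. \<forall>y v. \<mu> * (v \<bullet> v) \<le> v \<bullet> (H i y *v v)"
    and sigma: "0 < \<sigma>" "\<sigma> < 1"
    and gamma: "0 < \<gamma>" "\<gamma> < 1"
    and x0_dom: "\<forall>i\<in>{1..m}. g i (x 0) \<noteq> \<infinity>"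
    and dir: "\<forall>k. \<forall>v. newton_subobj m Df H g (x k) (d k) \<le> newton_subobj m Df H g (x k) v"
    and val: "\<forall>k. \<theta> k = newton_subobj m Df H g (x k) (d k)"
    and step: "\<forall>k. t k \<in> armijo_steps m f g \<sigma> \<gamma> (x k) (d k) (\<theta> k)
                    \<and> (\<forall>s\<in>armijo_steps m f g \<sigma> \<gamma> (x k) (d k) (\<theta> k). s \<le> t k)"
    and update: "\<forall>k. x (Suc k) = x k + t k *\<^sub>R d k"
    and not_crit: "\<forall>k. d k \<noteq> 0"
    and lim: "x \<longlonglongrightarrow> xstar"
  shows "(\<forall>\<epsilon>. 0 < \<epsilon> \<and> \<epsilon> \<le> (1 - \<sigma>) * \<mu> \<longrightarrow>
            (\<exists>K::nat. K > 0 \<and> (\<forall>k\<ge>K.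
               (let \<tau> = norm (x (Suc k) - x k) / norm (x k - xstar) in
                  norm (x (Suc k) - xstar) \<le> sqrt (\<epsilon> * (1 + \<tau>\<^sup>2) / \<mu>) * norm (x k - xstar)
                  \<and> (\<mu> - sqrt (2 * \<mu> * \<epsilon> - \<epsilon>\<^sup>2)) / (\<mu> - \<epsilon>) \<le> \<tau>
                  \<and> \<tau> \<le> (\<mu> + sqrt (2 * \<mu> * \<epsilon> - \<epsilon>\<^sup>2)) / (\<mu> - \<epsilon>)))))
         \<and> ((\<lambda>k. norm (x (Suc k) - xstar) / norm (x k - xstar)) \<longlonglongrightarrow> 0)"
proof -
  interpret prox_newton_run m f Df H g \<mu> \<sigma> \<gamma> x d \<theta> t xstar
    by (rule prox_newton_run.intro) (rule assms)+
  have "(1 - \<sigma>) * \<mu> < \<mu>" using sigma mu_pos by simp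
  then have "\<exists>K::nat. K > 0 \<and> (\<forall>k\<ge>K.
               (let \<tau> = norm (x (Suc k) - x k) / norm (x k - xstar) in
                  norm (x (Suc k) - xstar) \<le> sqrt (\<epsilon> * (1 + \<tau>\<^sup>2) / \<mu>) * norm (x k - xstar)
                  \<and> (\<mu> - sqrt (2 * \<mu> * \<epsilon> - \<epsilon>\<^sup>2)) / (\<mu> - \<epsilon>) \<le> \<tau>
                  \<and> \<tau> \<le> (\<mu> + sqrt (2 * \<mu> * \<epsilon> - \<epsilon>\<^sup>2)) / (\<mu> - \<epsilon>)))"
    if "0 < \<epsilon>" "\<epsilon> \<le> (1 - \<sigma>) * \<mu>" for \<epsilon>
    using that by (intro superlinear_imp_error_bounds superlinear_convergence eventually_iterate_ne_limit) auto
  with superlinear_convergence show ?thesis by blast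
qed

end
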